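(* Let $n\ge1$ and $d\ge0$. The map $\phi\colon\mathsf{PB}_{n,d}\to\mathsf{C}_{n,d}$ is a bijection.
   Context: A composition is a finite sequence of positive integers $\beta=(\beta_1,\dots,\beta_k)$, with length $\bm{l}(\beta)=k$ and size $|\beta|=\sum\beta_i$ (the empty composition is allowed). A partition is a weakly decreasing composition $\lambda=(\lambda_1\ge\lambda_2\ge\cdots)$. A composition $\alpha$ is inverting if for each integer $i$ with $1<i\le\max_j\alpha_j$ there exist indices $s<t$ with $\alpha_s=i$ and $\alpha_t=i-1$. Every composition factors uniquely as $\alpha=\gamma\,k^{i_k}\cdots2^{i_2}1^{i_1}$ (concatenation, $i_j\ge1$) with $\gamma$ a composition containing none of the values $1,\dots,k$ and $k\ge0$ maximal; $\alpha$ is pure if this $k$ is even. $\mathsf{B}_n$ is the set of pure and inverting compositions of length at most $n$. $\mathsf{C}_{n,d}$ is the set of compositions of $d$ with at most $n$ parts, and $\mathsf{PB}_{n,d}=\{(\lambda,\beta):\lambda$ a partition, $\beta\in\mathsf{B}_n$, $|\lambda|+|\beta|=d$, $\bm{l}(\lambda)\le n$, $\bm{l}(\beta)\le n\}$. For $(\lambda,\beta)\in\mathsf{PB}_{n,d}$, $\phi(\lambda,\beta)$ is defined as follows: if $\bm{l}(\lambda)>\bm{l}(\beta)$, first append $\bm{l}(\lambda)-\bm{l}(\beta)$ zeros after the last part of $\beta$. Then, for each $1\le i\le\bm{l}(\lambda)$, add $\lambda_i$ to the $i$-th largest part of (the padded) $\beta$, where parts are compared by value and, when $\beta_j=\beta_k$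 with $j<k$, the part $\beta_j$ is considered smaller than $\beta_k$. The resulting composition is $\phi(\lambda,\beta)$. *)

theory Defs
  imports Main
begin

definition is_composition :: "nat list \<Rightarrow> bool" where
  "is_composition \<alpha> \<longleftrightarrow> (\<forall>x\<in>set \<alpha>. 0 < x)"

definition is_partition :: "nat list \<Rightarrow> bool" where
  "is_partition lam \<longleftrightarrow> is_composition lam \<and> sorted_wrt (\<ge>) lam"

definition inverting :: "nat list \<Rightarrow> bool" where
  "inverting \<alpha> \<longleftrightarrow>
     (\<forall>i. 1 < i \<and> (\<exists>j<length \<alpha>. i \<le> \<alpha> ! j) \<longrightarrow>
        (\<exists>s t. s < t \<and> t < length \<alpha> \<and> \<alpha> ! s = i \<and> \<alpha> ! t = i - 1))"

definition factors_with :: "nat list \<Rightarrow> nat \<Rightarrow> bool" where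
  "factors_with \<alpha> k \<longleftrightarrow>
     (\<exists>\<gamma> (c::nat \<Rightarrow> nat). (\<forall>j\<in>{1..k}. 1 \<le> c j) \<and> (\<forall>x\<in>set \<gamma>. x \<notin> {1..k}) \<and>
        \<alpha> = \<gamma> @ concat (map (\<lambda>j. replicate (c j) j) (rev [1..<Suc k])))"

definition pure :: "nat list \<Rightarrow> bool" where
  "pure \<alpha> \<longleftrightarrow> even (GREATEST k. factors_with \<alpha> k)"

definition B_set :: "nat \<Rightarrow> nat list set" where
  "B_set n = {\<beta>. is_composition \<beta> \<and> pure \<beta> \<and> inverting \<beta> \<and> length \<beta> \<le> n}"

definition C_set :: "nat \<Rightarrow> nat \<Rightarrow> nat list set" where
  "C_set n d = {\<alpha>. is_composition \<alpha> \<and> sum_list \<alpha> = d \<and> length \<alpha> \<le> n}"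

definition PB_set :: "nat \<Rightarrow> nat \<Rightarrow> (nat list \<times> nat list) set" where
  "PB_set n d = {(lam, \<beta>). is_partition lam \<and> \<beta> \<in> B_set n \<and> sum_list lam + sum_list \<beta> = d
                       \<and> length lam \<le> n \<and> length \<beta> \<le> n}"

definition pad :: "nat list \<Rightarrow> nat list \<Rightarrow> nat list" where
  "pad lam \<beta> = \<beta> @ replicate (length lam - length \<beta>) 0"

definition rank :: "nat list \<Rightarrow> nat \<Rightarrow> nat" where
  "rank b j = card {k. k < length b \<and> (b ! j < b ! k \<or> (b ! j = b ! k \<and> j < k))}"

text \<open>phi: add lambda_i to the i-th largest part of the padded beta.\<close>
definition phi :: "nat list \<Rightarrow> nat list \<Rightarrow> nat list" where
  "phi lam \<beta> = (let b = pad lam \<beta> in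
     map (\<lambda>j. b ! j + (if rank b j < length lam then lam ! rank b j else 0)) [0..<length b])"

end

theory Submission
  imports Defs
begin

text \<open>Order the positions of a composition by value, ties broken by position. Adding the
  parts of a partition to the parts of \<open>\<beta>\<close> in decreasing order does not change this order, so
  \<open>\<alpha> = \<phi>(\<lambda>, \<beta>)\<close> induces the same order as the padded \<open>\<beta>\<close>. Because \<open>\<beta>\<close> is inverting, its
  padding is a staircase for that order: along the order it increases by exactly one when the
  larger of two consecutive positions lies to the left, and stays constant otherwise, and its
  lowest entry is 0 or 1. Staircases are unique up to an additive constant, so \<open>\<alpha>\<close> determines
  the padded \<open>\<beta>\<close> up to this choice of 0 or 1, and hence \<open>\<lambda>\<close>. The two choices are a composition
  \<open>\<beta>'\<close> and its lift \<open>map Suc \<beta>' @ 1\<^sup>c\<close>, and lifting changes the factor depth by one, so exactly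
  one of them is pure.

  Conversely, the staircase of \<open>\<alpha>\<close> with lowest entry 1 is an inverting composition lying below
  \<open>\<alpha>\<close>, and the excess of \<open>\<alpha>\<close> over it, read along the order, is weakly decreasing; this
  yields the preimage, after passing to the unlifted staircase when that staircase is impure.\<close>

section \<open>Ordering the positions of a composition\<close>

definition part_less :: "nat list \<Rightarrow> nat \<Rightarrow> nat \<Rightarrow> bool" where
  "part_less x j k \<longleftrightarrow> x!j < x!k \<or> (x!j = x!k \<and> j < k)"

lemma rank_eq_card_part_less: "rank x j = card {k. k < length x \<and> part_less x j k}"
  by (simp add: rank_def part_less_def)

lemma part_less_trans: "part_less x i j \<Longrightarrow> part_less x j k \<Longrightarrow> part_less x i k"
  unfolding part_less_def by auto

lemma part_less_irrefl: "\<not> part_less x j j"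
  unfolding part_less_def by auto

lemma part_less_asym: "part_less x j k \<Longrightarrow> \<not> part_less x k j"
  unfolding part_less_def by auto

lemma part_less_total: "j \<noteq> k \<Longrightarrow> part_less x j k \<or> part_less x k j"
  unfolding part_less_def by auto

lemma rank_less_rank:
  assumes "j < length x" "k < length x" "part_less x k j"
  shows "rank x j < rank x k"
proof -
  have "{i. i < length x \<and> part_less x j i} \<subset> {i. i < length x \<and> part_less x k i}"
    using assms part_less_trans part_less_irrefl by blast
  then show ?thesis
    unfolding rank_eq_card_part_less by (intro psubset_card_mono) auto
qed

lemma rank_less_rank_iff:
  assumes "j < length x" "k < length x"
  shows "rank x j < rank x k \<longleftrightarrow> part_less x k j"
  using assms rank_less_rank part_less_total by (metis less_asym less_irrefl)

lemma rank_less_length: "j < length x \<Longrightarrow> rank x j < length x"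
proof -
  assume "j < length x"
  have "{i. i < length x \<and> part_less x j i} \<subseteq> {..<length x} - {j}"
    using part_less_irrefl by auto
  then have "rank x j \<le> card ({..<length x} - {j})"
    unfolding rank_eq_card_part_less by (intro card_mono) auto
  with \<open>j < length x\<close> show ?thesis by simp
qed

lemma inj_on_rank: "inj_on (rank x) {..<length x}"
  by (intro inj_onI) (metis lessThan_iff less_irrefl part_less_total rank_less_rank)

lemma bij_betw_rank: "bij_betw (rank x) {..<length x} {..<length x}"
proof -
  have "rank x ` {..<length x} \<subseteq> {..<length x}"
    using rank_less_length by auto
  moreover have "card (rank x ` {..<length x}) = length x"
    using card_image[OF inj_on_rank] by simp
  ultimately have "rank x ` {..<length x} = {..<length x}"
    by (intro card_subset_eq) auto
  then show ?thesis
    using inj_on_rank by (simp add: bij_betw_def)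
qed

definition unrank :: "nat list \<Rightarrow> nat \<Rightarrow> nat" where
  "unrank x r = inv_into {..<length x} (rank x) r"

lemma unrank_less_length: "r < length x \<Longrightarrow> unrank x r < length x"
  unfolding unrank_def
  using bij_betwE[OF bij_betw_inv_into[OF bij_betw_rank]] by auto

lemma rank_unrank: "r < length x \<Longrightarrow> rank x (unrank x r) = r"
  unfolding unrank_def using bij_betw_rank by (simp add: bij_betw_def f_inv_into_f)

lemma unrank_rank: "j < length x \<Longrightarrow> unrank x (rank x j) = j"
  unfolding unrank_def using inj_on_rank by (simp add: inv_into_f_f)

text \<open>Rank 0 belongs to the largest position, so \<open>covers x k j\<close> says that \<open>k\<close> is the next
  larger position after \<open>j\<close>.\<close>
definition covers :: "nat list \<Rightarrow> nat \<Rightarrow> nat \<Rightarrow> bool" where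
  "covers x k j \<longleftrightarrow> j < length x \<and> k < length x \<and> Suc (rank x k) = rank x j"

lemma covers_unrank: "Suc r < length x \<Longrightarrow> covers x (unrank x r) (unrank x (Suc r))"
  unfolding covers_def by (simp add: unrank_less_length rank_unrank)

lemma covers_part_less: "covers x k j \<Longrightarrow> part_less x j k"
  unfolding covers_def using rank_less_rank_iff by (metis lessI)

lemma covers_nothing_between:
  "covers x k j \<Longrightarrow> i < length x \<Longrightarrow> \<not> (part_less x j i \<and> part_less x i k)"
  unfolding covers_def using rank_less_rank by (metis Suc_le_eq leD less_imp_le_nat)

lemma covers_induct[consumes 1, case_names bottom step]:
  assumes "k < length x"
    and bottom: "P (unrank x (length x - 1))"
    and step: "\<And>j k. covers x k j \<Longrightarrow> P j \<Longrightarrow> P k"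
  shows "P k"
proof -
  have "\<forall>k<length x. rank x k + t = length x - 1 \<longrightarrow> P k" for t
  proof (induction t)
    case 0
    then show ?case using bottom unrank_rank by fastforce
  next
    case (Suc t)
    show ?case
    proof (intro allI impI)
      fix k assume k: "k < length x" "rank x k + Suc t = length x - 1"
      define j where "j = unrank x (Suc (rank x k))"
      have "covers x k j"
        using covers_unrank[of "rank x k" x] k unfolding j_def by (simp add: unrank_rank)
      moreover have "P j"
        using Suc k \<open>covers x k j\<close> unfolding covers_def by auto
      ultimately show "P k" by (rule step)
    qed
  qed
  moreover have "rank x k + (length x - 1 - rank x k) = length x - 1"
    using rank_less_length[OF assms(1)] by simp
  ultimately show ?thesis using assms(1) by blast
qed

lemma part_less_by_covers:
  assumes trans: "\<And>i j k. Q i j \<Longrightarrow> Q j k \<Longrightarrow> Q i k"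
    and cover: "\<And>j k. covers x k j \<Longrightarrow> Q j k"
    and "j < length x" "k < length x" "part_less x j k"
  shows "Q j k"
proof -
  have "\<forall>j k. j < length x \<longrightarrow> k < length x \<longrightarrow> rank x k + Suc t = rank x j \<longrightarrow> Q j k" for t
  proof (induction t)
    case 0
    then show ?case using cover unfolding covers_def by simp
  next
    case (Suc t)
    show ?case
    proof (intro allI impI)
      fix j k assume jk: "j < length x" "k < length x" "rank x k + Suc (Suc t) = rank x j"
      define i where "i = unrank x (Suc (rank x k))"
      have "covers x k i"
        using covers_unrank[of "rank x k" x] jk rank_less_length[of j x]
        unfolding i_def by (simp add: unrank_rank)
      then have "Q j i"
        using Suc jk unfolding covers_def by auto
      then show "Q j k" using cover[OF \<open>covers x k i\<close>] trans by blast
    qed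
  qed
  moreover obtain t where "rank x j = rank x k + Suc t"
    using rank_less_rank[OF assms(4,3,5)] less_iff_Suc_add by (metis add.commute add_Suc)
  ultimately show ?thesis using assms(3,4) by metis
qed

lemma rank_eq_if_part_less_mono:
  assumes "length a = length b"
    and mono: "\<And>j k. j < length b \<Longrightarrow> k < length b \<Longrightarrow> part_less b j k \<Longrightarrow> part_less a j k"
    and "j < length b"
  shows "rank a j = rank b j"
proof -
  have "part_less a j k \<longleftrightarrow> part_less b j k" if "k < length b" for k
    using that assms(3) mono part_less_total part_less_asym part_less_irrefl by metis
  then show ?thesis
    unfolding rank_eq_card_part_less using assms(1) by (intro arg_cong[where f=card]) auto
qed

section \<open>Staircases\<close>

definition staircase :: "nat list \<Rightarrow> nat list \<Rightarrow> bool" where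
  "staircase x b \<longleftrightarrow> length b = length x \<and>
     (\<forall>j k. covers x k j \<longrightarrow> b!k = b!j + (if k < j then 1 else 0))"

lemma staircase_part_less:
  assumes "staircase x b" "j < length x" "k < length x" "part_less x j k"
  shows "part_less b j k"
proof (rule part_less_by_covers[where x=x])
  show "part_less b j k" if "covers x k j" for j k
  proof -
    have "j \<noteq> k" using that unfolding covers_def by auto
    then show ?thesis using assms(1) that unfolding staircase_def part_less_def by auto
  qed
qed (use assms part_less_trans in blast)+

lemma rank_staircase: "staircase x b \<Longrightarrow> j < length x \<Longrightarrow> rank b j = rank x j"
  using rank_eq_if_part_less_mono[of b x] staircase_part_less[of x b]
  unfolding staircase_def by metis

lemma staircase_unique:
  assumes "staircase x b" "staircase x b'" "j < length x"
  defines "low \<equiv> unrank x (length x - 1)"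
  shows "b!j + b'!low = b'!j + b!low"
  using assms(3)
proof (induction rule: covers_induct)
  case (step j k)
  then show ?case using assms(1,2) unfolding staircase_def by auto
qed (simp add: low_def)

definition nth_or_zero :: "nat list \<Rightarrow> nat \<Rightarrow> nat" where
  "nth_or_zero xs r = (if r < length xs then xs!r else 0)"

lemma nth_or_zero_antimono: "sorted_wrt (\<ge>) xs \<Longrightarrow> r \<le> s \<Longrightarrow> nth_or_zero xs s \<le> nth_or_zero xs r"
  unfolding nth_or_zero_def sorted_wrt_iff_nth_less by (cases "r = s") auto

lemma length_pad: "length (pad lam \<beta>) = max (length lam) (length \<beta>)"
  by (simp add: pad_def)

lemma nth_pad: "j < length (pad lam \<beta>) \<Longrightarrow> pad lam \<beta> ! j = (if j < length \<beta> then \<beta>!j else 0)"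
  by (auto simp: pad_def nth_append)

lemma length_phi: "length (phi lam \<beta>) = length (pad lam \<beta>)"
  by (simp add: phi_def Let_def)

lemma nth_phi:
  "j < length (pad lam \<beta>) \<Longrightarrow> phi lam \<beta> ! j = pad lam \<beta> ! j + nth_or_zero lam (rank (pad lam \<beta>) j)"
  by (simp add: phi_def Let_def nth_or_zero_def)

lemma part_less_add_antitone:
  assumes "\<And>j. j < length b \<Longrightarrow> a!j = b!j + g (rank b j)" and "antimono g"
    and "j < length b" "k < length b" "part_less b j k"
  shows "part_less a j k"
proof -
  have "g (rank b j) \<le> g (rank b k)"
    using rank_less_rank[OF assms(4,3,5)] \<open>antimono g\<close> by (simp add: antimonoD)
  then show ?thesis
    using assms(1)[OF assms(3)] assms(1)[OF assms(4)] assms(5) unfolding part_less_def by auto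
qed

lemma rank_phi:
  assumes "sorted_wrt (\<ge>) lam" "j < length (pad lam \<beta>)"
  shows "rank (phi lam \<beta>) j = rank (pad lam \<beta>) j"
proof (rule rank_eq_if_part_less_mono[OF length_phi _ assms(2)])
  have anti: "antimono (nth_or_zero lam)"
    using nth_or_zero_antimono[OF assms(1)] by (intro antimonoI)
  show "part_less (phi lam \<beta>) j k"
    if "j < length (pad lam \<beta>)" "k < length (pad lam \<beta>)" "part_less (pad lam \<beta>) j k" for j k
    using part_less_add_antitone[OF nth_phi anti that] by simp
qed

lemma sum_list_phi: "sum_list (phi lam \<beta>) = sum_list lam + sum_list \<beta>"
proof -
  let ?b = "pad lam \<beta>" let ?L = "length ?b"
  have "sum_list (phi lam \<beta>) = (\<Sum>j<?L. phi lam \<beta> ! j)"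
    by (simp add: sum_list_sum_nth length_phi atLeast0LessThan)
  also have "\<dots> = (\<Sum>j<?L. ?b ! j) + (\<Sum>j<?L. nth_or_zero lam (rank ?b j))"
    by (simp add: nth_phi sum.distrib)
  also have "(\<Sum>j<?L. nth_or_zero lam (rank ?b j)) = (\<Sum>r<?L. nth_or_zero lam r)"
    using sum.reindex_bij_betw[OF bij_betw_rank[of ?b]] by blast
  also have "\<dots> = (\<Sum>r<length lam. nth_or_zero lam r)"
    by (rule sum.mono_neutral_right) (auto simp: length_pad nth_or_zero_def)
  also have "\<dots> = sum_list lam"
    by (simp add: nth_or_zero_def sum_list_sum_nth atLeast0LessThan)
  also have "(\<Sum>j<?L. ?b ! j) = sum_list ?b"
    by (simp add: sum_list_sum_nth atLeast0LessThan)
  also have "sum_list ?b = sum_list \<beta>"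
    by (simp add: pad_def)
  finally show ?thesis by simp
qed

lemma is_composition_iff_nth: "is_composition x \<longleftrightarrow> (\<forall>j<length x. 0 < x!j)"
  by (auto simp: is_composition_def in_set_conv_nth)

lemma is_composition_phi:
  assumes "is_composition lam" "is_composition \<beta>"
  shows "is_composition (phi lam \<beta>)"
  unfolding is_composition_iff_nth
proof (intro allI impI)
  fix j assume "j < length (phi lam \<beta>)"
  then have j: "j < length (pad lam \<beta>)" by (simp add: length_phi)
  show "0 < phi lam \<beta> ! j"
  proof (cases "j < length \<beta>")
    case True
    then show ?thesis
      using nth_phi[OF j] nth_pad[OF j] assms(2) by (simp add: is_composition_iff_nth)
  next
    case False
    then have "rank (pad lam \<beta>) j < length lam"
      using j rank_less_length[OF j] length_pad[of lam \<beta>] by auto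
    then show ?thesis
      using nth_phi[OF j] assms(1) by (simp add: nth_or_zero_def is_composition_iff_nth)
  qed
qed

section \<open>Padded inverting compositions are staircases\<close>

lemma invertingE:
  assumes "inverting \<beta>" "1 < i" "j < length \<beta>" "i \<le> \<beta>!j"
  obtains s t where "s < t" "t < length \<beta>" "\<beta>!s = i" "\<beta>!t = i - 1"
  using assms unfolding inverting_def by blast

lemma pad_covers_succ:
  assumes inv: "inverting \<beta>" and cov: "covers (pad lam \<beta>) k j"
    and less: "pad lam \<beta> ! j < pad lam \<beta> ! k"
  shows "pad lam \<beta> ! k = Suc (pad lam \<beta> ! j)"
proof (rule ccontr)
  let ?b = "pad lam \<beta>"
  have len: "length \<beta> \<le> length ?b" by (simp add: length_pad)
  have k: "k < length \<beta>" "?b!k = \<beta>!k"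
    using less cov nth_pad[of k lam \<beta>] unfolding covers_def by (auto split: if_splits)
  assume "?b!k \<noteq> Suc (?b!j)"
  then have "1 < \<beta>!k" "\<beta>!k - 1 > ?b!j" using less k by auto
  then obtain s t where t: "t < length \<beta>" "\<beta>!t = \<beta>!k - 1"
    using invertingE[OF inv _ k(1) order_refl] by metis
  then have "part_less ?b j t" "part_less ?b t k"
    using \<open>\<beta>!k - 1 > ?b!j\<close> \<open>1 < \<beta>!k\<close> k len nth_pad[of t lam \<beta>]
    unfolding part_less_def by auto
  then show False
    using covers_nothing_between[OF cov, of t] t len by simp
qed

lemma pad_covers_descent:
  assumes comp: "is_composition \<beta>" and inv: "inverting \<beta>" and cov: "covers (pad lam \<beta>) k j"
    and less: "pad lam \<beta> ! j < pad lam \<beta> ! k"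
  shows "k < j"
proof -
  let ?b = "pad lam \<beta>"
  have len: "length \<beta> \<le> length ?b" by (simp add: length_pad)
  have jk: "j < length ?b" "k < length ?b" using cov unfolding covers_def by auto
  have k: "k < length \<beta>" "?b!k = \<beta>!k"
    using less jk nth_pad[of k lam \<beta>] by (auto split: if_splits)
  have succ: "?b!k = Suc (?b!j)" by (rule pad_covers_succ[OF inv cov less])
  show ?thesis
  proof (cases "j < length \<beta>")
    case False
    then show ?thesis using k by simp
  next
    case True
    then have "0 < ?b!j"
      using comp jk nth_pad[of j lam \<beta>] by (simp add: is_composition_iff_nth)
    then obtain s t where st: "s < t" "t < length \<beta>" "\<beta>!s = \<beta>!k" "\<beta>!t = \<beta>!k - 1"
      using invertingE[OF inv _ k(1) order_refl] succ k by (metis One_nat_def Suc_less_eq)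
    have bst: "?b!s = ?b!k" "?b!t = ?b!j"
      using st len nth_pad[of s lam \<beta>] nth_pad[of t lam \<beta>] k succ by auto
    have "k \<le> s"
    proof (rule ccontr)
      assume "\<not> k \<le> s"
      then have "part_less ?b j s" "part_less ?b s k"
        using bst less unfolding part_less_def by auto
      then show False using covers_nothing_between[OF cov, of s] st len by simp
    qed
    moreover have "t \<le> j"
    proof (rule ccontr)
      assume "\<not> t \<le> j"
      then have "part_less ?b j t" "part_less ?b t k"
        using bst less unfolding part_less_def by auto
      then show False using covers_nothing_between[OF cov, of t] st len by simp
    qed
    ultimately show ?thesis using st by simp
  qed
qed

lemma staircase_pad:
  assumes "is_composition \<beta>" "inverting \<beta>"
  shows "staircase (pad lam \<beta>) (pad lam \<beta>)"
  unfolding staircase_def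
proof (intro conjI allI impI)
  fix j k assume cov: "covers (pad lam \<beta>) k j"
  then have "part_less (pad lam \<beta>) j k" by (rule covers_part_less)
  then consider "pad lam \<beta> ! j = pad lam \<beta> ! k" "j < k" | "pad lam \<beta> ! j < pad lam \<beta> ! k"
    unfolding part_less_def by blast
  then show "pad lam \<beta> ! k = pad lam \<beta> ! j + (if k < j then 1 else 0)"
  proof cases
    case 2
    then show ?thesis
      using pad_covers_succ[OF assms(2) cov] pad_covers_descent[OF assms cov] by simp
  qed simp
qed simp

lemma pad_lowest_le_one:
  assumes inv: "inverting \<beta>" and j: "j < length (pad lam \<beta>)"
    and lowest: "rank (pad lam \<beta>) j = length (pad lam \<beta>) - 1"
  shows "pad lam \<beta> ! j \<le> 1"
proof (rule ccontr)
  let ?b = "pad lam \<beta>"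
  assume "\<not> ?b!j \<le> 1"
  then have jm: "j < length \<beta>" "?b!j = \<beta>!j" "1 < \<beta>!j"
    using nth_pad[OF j] by (auto split: if_splits)
  then obtain s t where t: "t < length \<beta>" "\<beta>!t = \<beta>!j - 1"
    using invertingE[OF inv jm(3) jm(1) order_refl] by metis
  then have "t < length ?b" "part_less ?b t j"
    using jm nth_pad[of t lam \<beta>] unfolding part_less_def by (auto simp: length_pad)
  then have "rank ?b j < rank ?b t" using rank_less_rank_iff[OF j] by blast
  then show False using lowest rank_less_length[OF \<open>t < length ?b\<close>] by simp
qed

section \<open>Factor depth and purity\<close>

definition blocks :: "(nat \<Rightarrow> nat) \<Rightarrow> nat \<Rightarrow> nat list" where
  "blocks c k = concat (map (\<lambda>j. replicate (c j) j) (rev [1..<Suc k]))"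

lemma blocks_0[simp]: "blocks c 0 = []"
  by (simp add: blocks_def)

lemma blocks_Suc: "blocks c (Suc k) = replicate (c (Suc k)) (Suc k) @ blocks c k"
  by (simp add: blocks_def)

lemma blocks_Suc_shift: "blocks c (Suc k) = map Suc (blocks (\<lambda>j. c (Suc j)) k) @ replicate (c 1) 1"
  by (induction k) (simp_all add: blocks_Suc)

lemma blocks_cong: "(\<And>j. 1 \<le> j \<Longrightarrow> j \<le> k \<Longrightarrow> c j = c' j) \<Longrightarrow> blocks c k = blocks c' k"
  by (induction k) (simp_all add: blocks_Suc)

lemma length_blocks_ge: "(\<And>j. 1 \<le> j \<Longrightarrow> j \<le> k \<Longrightarrow> 1 \<le> c j) \<Longrightarrow> k \<le> length (blocks c k)"
proof (induction k)
  case (Suc k)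
  then have "k \<le> length (blocks c k)" "1 \<le> c (Suc k)" by auto
  then show ?case by (simp add: blocks_Suc)
qed simp

lemma set_blocks: "set (blocks c k) \<subseteq> {1..k}"
  by (induction k) (auto simp: blocks_Suc)

lemma factors_with_iff_blocks:
  "factors_with x k \<longleftrightarrow>
     (\<exists>\<gamma> c. (\<forall>j\<in>{1..k}. 1 \<le> c j) \<and> (\<forall>v\<in>set \<gamma>. v \<notin> {1..k}) \<and> x = \<gamma> @ blocks c k)"
  by (simp add: factors_with_def blocks_def)

lemma factors_with_le_length: "factors_with x k \<Longrightarrow> k \<le> length x"
  unfolding factors_with_iff_blocks using length_blocks_ge
  by (metis atLeastAtMost_iff le_trans length_append le_add2)

lemma factors_with_0: "factors_with x 0"
  unfolding factors_with_iff_blocks by simp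

definition factor_depth :: "nat list \<Rightarrow> nat" where
  "factor_depth x = (GREATEST k. factors_with x k)"

lemma pure_iff_even_factor_depth: "pure x \<longleftrightarrow> even (factor_depth x)"
  by (simp add: pure_def factor_depth_def)

lemma factors_with_factor_depth: "factors_with x (factor_depth x)"
  unfolding factor_depth_def
  by (rule GreatestI_nat[of _ 0 "length x"]) (rule factors_with_0, erule factors_with_le_length)

lemma le_factor_depth: "factors_with x k \<Longrightarrow> k \<le> factor_depth x"
  unfolding factor_depth_def
  by (rule Greatest_le_nat[of _ k "length x"]) (assumption, erule factors_with_le_length)

abbreviation lift :: "nat list \<Rightarrow> nat \<Rightarrow> nat list" where
  "lift y c \<equiv> map Suc y @ replicate c 1"

lemma lift_inj:
  assumes "is_composition y" "is_composition y'" "lift y c = lift y' c'"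
  shows "y = y'"
proof -
  have strip: "dropWhile (\<lambda>v. v = 1) (rev (lift z e)) = rev (map Suc z)"
    if "is_composition z" for z e
  proof -
    have "dropWhile (\<lambda>v. v = 1) (rev (lift z e)) =
          dropWhile (\<lambda>v. v = 1) (replicate e 1 @ rev (map Suc z))"
      by simp
    also have "\<dots> = dropWhile (\<lambda>v. v = 1) (rev (map Suc z))"
      by (rule dropWhile_append2) simp
    also have "\<dots> = rev (map Suc z)"
      using that by (cases "rev z") (auto simp: dropWhile_eq_self_iff is_composition_def)
    finally show ?thesis .
  qed
  have "rev (map Suc y) = dropWhile (\<lambda>v. v = 1) (rev (lift y c))"
    using strip[OF assms(1)] by metis
  also have "\<dots> = dropWhile (\<lambda>v. v = 1) (rev (lift y' c'))"
    by (simp only: assms(3))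
  also have "\<dots> = rev (map Suc y')"
    using strip[OF assms(2)] by metis
  finally show ?thesis by (simp add: inj_map_eq_map)
qed

lemma factors_with_SucE:
  assumes comp: "is_composition x" and fw: "factors_with x (Suc k)"
  obtains y c where "1 \<le> c" "is_composition y" "x = lift y c" "factors_with y k"
proof -
  obtain \<gamma> c where c: "\<forall>j\<in>{1..Suc k}. 1 \<le> c j" and \<gamma>: "\<forall>v\<in>set \<gamma>. v \<notin> {1..Suc k}"
    and x: "x = \<gamma> @ blocks c (Suc k)"
    using fw unfolding factors_with_iff_blocks by blast
  have "\<forall>v\<in>set \<gamma>. 0 < v"
    using comp x unfolding is_composition_def by auto
  then have large: "\<forall>v\<in>set \<gamma>. k + 2 \<le> v"
    using \<gamma> by force
  define \<gamma>' where "\<gamma>' = map (\<lambda>v. v - 1) \<gamma>"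
  have \<gamma>_eq: "\<gamma> = map Suc \<gamma>'"
    unfolding \<gamma>'_def using large by (induction \<gamma>) auto
  define y where "y = \<gamma>' @ blocks (\<lambda>j. c (Suc j)) k"
  have "x = lift y (c 1)"
    unfolding y_def using x \<gamma>_eq blocks_Suc_shift by simp
  moreover have "is_composition y"
    unfolding y_def is_composition_def \<gamma>'_def using large set_blocks by fastforce
  moreover have "factors_with y k"
    unfolding factors_with_iff_blocks y_def
    using c large by (intro exI[of _ \<gamma>'] exI[of _ "\<lambda>j. c (Suc j)"]) (auto simp: \<gamma>'_def)
  moreover have "1 \<le> c 1" using c by simp
  ultimately show ?thesis using that by blast
qed

lemma factors_with_lift:
  assumes "is_composition y" "1 \<le> c" "factors_with y k"
  shows "factors_with (lift y c) (Suc k)"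
proof -
  obtain \<gamma> c' where c': "\<forall>j\<in>{1..k}. 1 \<le> c' j" and \<gamma>: "\<forall>v\<in>set \<gamma>. v \<notin> {1..k}"
    and y: "y = \<gamma> @ blocks c' k"
    using assms(3) unfolding factors_with_iff_blocks by blast
  define c'' where "c'' = (\<lambda>j. if j = 1 then c else c' (j - 1))"
  have "blocks c'' (Suc k) = map Suc (blocks (\<lambda>j. c'' (Suc j)) k) @ replicate c 1"
    by (simp add: blocks_Suc_shift c''_def)
  also have "blocks (\<lambda>j. c'' (Suc j)) k = blocks c' k"
    by (rule blocks_cong) (auto simp: c''_def)
  finally have "lift y c = map Suc \<gamma> @ blocks c'' (Suc k)"
    using y by simp
  moreover have "\<forall>j\<in>{1..Suc k}. 1 \<le> c'' j"
  proof
    fix j assume "j \<in> {1..Suc k}"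
    then have "j = 1 \<or> j - 1 \<in> {1..k}" by auto
    then show "1 \<le> c'' j" using c' assms(2) by (auto simp: c''_def)
  qed
  moreover have "\<forall>v\<in>set (map Suc \<gamma>). v \<notin> {1..Suc k}"
  proof
    fix v assume "v \<in> set (map Suc \<gamma>)"
    then obtain u where u: "u \<in> set \<gamma>" "v = Suc u" by auto
    have "0 < u" using assms(1) y u(1) unfolding is_composition_def by simp
    then show "v \<notin> {1..Suc k}" using \<gamma> u by auto
  qed
  ultimately show ?thesis
    unfolding factors_with_iff_blocks by blast
qed

lemma factor_depth_lift:
  assumes "is_composition y" "1 \<le> c"
  shows "factor_depth (lift y c) = Suc (factor_depth y)"
proof (rule antisym)
  have comp: "is_composition (lift y c)"
    using assms(1) unfolding is_composition_def by auto
  show "factor_depth (lift y c) \<le> Suc (factor_depth y)"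
  proof (cases "factor_depth (lift y c)")
    case (Suc k)
    then obtain y' c' where y': "is_composition y'" "lift y c = lift y' c'" "factors_with y' k"
      using factors_with_SucE[OF comp] factors_with_factor_depth by metis
    then have "factors_with y k"
      using lift_inj[OF assms(1) y'(1,2)] by simp
    then show ?thesis
      using le_factor_depth Suc by simp
  qed simp
  show "Suc (factor_depth y) \<le> factor_depth (lift y c)"
    using le_factor_depth factors_with_lift[OF assms factors_with_factor_depth] by blast
qed

lemma pure_lift_iff:
  assumes "is_composition y" "1 \<le> c"
  shows "pure (lift y c) \<longleftrightarrow> \<not> pure y"
  unfolding pure_iff_even_factor_depth factor_depth_lift[OF assms] by simp

lemma pure_if_not_lift:
  assumes "is_composition x" "\<nexists>y c. 1 \<le> c \<and> is_composition y \<and> x = lift y c"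
  shows "pure x"
proof -
  have "factor_depth x = 0"
  proof (rule ccontr)
    assume "factor_depth x \<noteq> 0"
    then obtain k where "factors_with x (Suc k)"
      using factors_with_factor_depth not0_implies_Suc by metis
    then show False
      using factors_with_SucE[OF assms(1)] assms(2) by metis
  qed
  then show ?thesis by (simp add: pure_iff_even_factor_depth)
qed

lemma inverting_lift_imp_inverting:
  assumes inv: "inverting (lift y c)"
  shows "inverting y"
  unfolding inverting_def
proof (intro allI impI)
  have nth_lift: "j < length (lift y c) \<Longrightarrow> lift y c ! j = (if j < length y then Suc (y!j) else 1)" for j
    by (auto simp: nth_append)
  fix i assume "1 < i \<and> (\<exists>j<length y. i \<le> y ! j)"
  then obtain j where i: "1 < i" and j: "j < length y" "i \<le> y!j" by auto
  obtain s t where st: "s < t" "t < length (lift y c)" "lift y c ! s = Suc i" "lift y c ! t = i"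
    using invertingE[OF inv, of "Suc i" j] i j nth_lift[of j] by auto
  have "t < length y" using nth_lift[OF st(2)] st(4) i by (auto split: if_splits)
  then show "\<exists>s t. s < t \<and> t < length y \<and> y ! s = i \<and> y ! t = i - 1"
    using st nth_lift[of s] nth_lift[of t] by (intro exI[of _ s] exI[of _ t]) auto
qed

section \<open>The canonical staircase\<close>

lemma staircase_step_le:
  assumes "staircase a b" "covers a k j"
  shows "a!j + b!k \<le> a!k + b!j"
  using assms covers_part_less[OF assms(2)] unfolding staircase_def part_less_def by auto

text \<open>Counting from the bottom of the order, the canonical staircase of \<open>a\<close> starts at 1 and
  rises at each ascent, i.e.\ whenever the next larger position lies to the left.\<close>
definition ascents_from :: "nat list \<Rightarrow> nat \<Rightarrow> nat set" where
  "ascents_from a r = {s. r \<le> s \<and> Suc s < length a \<and> unrank a s < unrank a (Suc s)}"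

definition canonical_staircase :: "nat list \<Rightarrow> nat list" where
  "canonical_staircase a = map (\<lambda>j. 1 + card (ascents_from a (rank a j))) [0..<length a]"

lemma length_canonical_staircase[simp]: "length (canonical_staircase a) = length a"
  by (simp add: canonical_staircase_def)

lemma nth_canonical_staircase:
  "j < length a \<Longrightarrow> canonical_staircase a ! j = 1 + card (ascents_from a (rank a j))"
  by (simp add: canonical_staircase_def)

lemma is_composition_canonical_staircase: "is_composition (canonical_staircase a)"
  unfolding is_composition_def canonical_staircase_def by auto

lemma staircase_canonical_staircase: "staircase a (canonical_staircase a)"
  unfolding staircase_def
proof (intro conjI allI impI)
  fix j k assume cov: "covers a k j"
  let ?r = "rank a k"
  have jk: "j < length a" "k < length a" "Suc ?r = rank a j" "Suc ?r < length a"
    using cov rank_less_length[of j a] unfolding covers_def by auto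
  have "unrank a ?r = k" "unrank a (Suc ?r) = j"
    using unrank_rank jk by metis+
  then have "ascents_from a ?r =
      (if k < j then insert ?r (ascents_from a (Suc ?r)) else ascents_from a (Suc ?r))"
    unfolding ascents_from_def using jk by (auto simp: le_eq_less_or_eq)
  moreover have "finite (ascents_from a (Suc ?r))" "?r \<notin> ascents_from a (Suc ?r)"
    unfolding ascents_from_def by (rule finite_subset[of _ "{..<length a}"]) auto
  ultimately show "canonical_staircase a ! k = canonical_staircase a ! j + (if k < j then 1 else 0)"
    using nth_canonical_staircase jk by simp
qed simp

lemma canonical_staircase_lowest:
  assumes "0 < length a"
  shows "canonical_staircase a ! unrank a (length a - 1) = 1"
proof -
  have "ascents_from a (length a - 1) = {}"
    unfolding ascents_from_def by auto
  then show ?thesis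
    using assms unrank_less_length rank_unrank by (simp add: nth_canonical_staircase)
qed

lemma canonical_staircase_le:
  assumes "is_composition a" "k < length a"
  shows "canonical_staircase a ! k \<le> a!k"
proof -
  let ?low = "unrank a (length a - 1)"
  have "canonical_staircase a ! k + (a!?low - 1) \<le> a!k"
    using assms(2)
  proof (induction rule: covers_induct)
    case bottom
    have "0 < a!?low"
      using assms unrank_less_length[of "length a - 1" a] by (simp add: is_composition_iff_nth)
    moreover have "0 < length a" using assms(2) by linarith
    ultimately show ?case using canonical_staircase_lowest by simp
  next
    case (step j k)
    then show ?case
      using staircase_step_le[OF staircase_canonical_staircase step(1)] by simp
  qed
  then show ?thesis by simp
qed

lemma inverting_canonical_staircase: "inverting (canonical_staircase a)"
  unfolding inverting_def
proof (intro allI impI)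
  let ?c = "canonical_staircase a"
  fix i assume "1 < i \<and> (\<exists>j<length ?c. i \<le> ?c ! j)"
  then obtain j0 where i: "1 < i" and j0: "j0 < length a" "i \<le> ?c ! j0" by auto
  let ?R = "{r. r < length a \<and> i \<le> ?c ! unrank a r}"
  define r where "r = Max ?R"
  have "rank a j0 \<in> ?R" using j0 rank_less_length unrank_rank by simp
  then have rR: "r \<in> ?R" unfolding r_def by (intro Max_in) auto
  moreover have "0 < length a" using j0 by linarith
  ultimately have "r \<noteq> length a - 1" using canonical_staircase_lowest i by auto
  then have r: "Suc r < length a" using rR by auto
  have "Suc r \<notin> ?R"
  proof
    assume "Suc r \<in> ?R"
    then have "Suc r \<le> r" using Max_ge[of ?R] unfolding r_def by simp
    then show False by simp
  qed
  then have below: "?c ! unrank a (Suc r) < i" using r by simp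
  have cov: "covers a (unrank a r) (unrank a (Suc r))" by (rule covers_unrank[OF r])
  then have "?c ! unrank a r = ?c ! unrank a (Suc r) + (if unrank a r < unrank a (Suc r) then 1 else 0)"
    using staircase_canonical_staircase unfolding staircase_def by blast
  then have "unrank a r < unrank a (Suc r)" "?c ! unrank a r = i" "?c ! unrank a (Suc r) = i - 1"
    using below rR by (auto split: if_splits)
  then show "\<exists>s t. s < t \<and> t < length ?c \<and> ?c ! s = i \<and> ?c ! t = i - 1"
    using cov unfolding covers_def by auto
qed

definition excess :: "nat list \<Rightarrow> nat \<Rightarrow> nat" where
  "excess a r = (if r < length a then a ! unrank a r - canonical_staircase a ! unrank a r else 0)"

lemma antimono_excess:
  assumes "is_composition a"
  shows "antimono (excess a)"
proof -
  have "excess a (Suc r) \<le> excess a r" for r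
  proof (cases "Suc r < length a")
    case True
    let ?j = "unrank a (Suc r)" and ?k = "unrank a r"
    have cov: "covers a ?k ?j" by (rule covers_unrank[OF True])
    then have "canonical_staircase a ! ?j \<le> a ! ?j"
      using canonical_staircase_le[OF assms] unfolding covers_def by blast
    then show ?thesis
      using True staircase_step_le[OF staircase_canonical_staircase cov] by (simp add: excess_def)
  qed (simp add: excess_def)
  then show ?thesis by (metis antimonoI lift_Suc_antimono_le)
qed

lemma nth_eq_canonical_staircase_plus_excess:
  assumes "is_composition a" "j < length a"
  shows "a!j = canonical_staircase a ! j + excess a (rank a j)"
  using assms canonical_staircase_le[OF assms] rank_less_length unrank_rank
  by (simp add: excess_def)

section \<open>Injectivity\<close>

lemma staircase_phi_pad:
  assumes "sorted_wrt (\<ge>) lam" "is_composition \<beta>" "inverting \<beta>"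
  shows "staircase (phi lam \<beta>) (pad lam \<beta>)"
proof -
  have "covers (phi lam \<beta>) k j \<longleftrightarrow> covers (pad lam \<beta>) k j" for j k
    using rank_phi[OF assms(1)] unfolding covers_def length_phi by auto
  then show ?thesis
    using staircase_pad[OF assms(2,3), of lam] unfolding staircase_def by (simp add: length_phi)
qed

lemma pad_lowest_le_one_phi:
  assumes "sorted_wrt (\<ge>) lam" "inverting \<beta>" "0 < length (phi lam \<beta>)"
  shows "pad lam \<beta> ! unrank (phi lam \<beta>) (length (phi lam \<beta>) - 1) \<le> 1"
proof (rule pad_lowest_le_one[OF assms(2)])
  let ?j = "unrank (phi lam \<beta>) (length (phi lam \<beta>) - 1)"
  have "?j < length (phi lam \<beta>)"
    using unrank_less_length assms(3) by simp
  then show j: "?j < length (pad lam \<beta>)"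
    by (simp add: length_phi)
  show "rank (pad lam \<beta>) ?j = length (pad lam \<beta>) - 1"
    using rank_phi[OF assms(1) j] rank_unrank assms(3) by (simp add: length_phi)
qed

lemma nth_or_zero_eq_phi_minus_pad:
  assumes "sorted_wrt (\<ge>) lam" "r < length (phi lam \<beta>)"
  defines "j \<equiv> unrank (phi lam \<beta>) r"
  shows "nth_or_zero lam r = phi lam \<beta> ! j - pad lam \<beta> ! j"
proof -
  have "j < length (phi lam \<beta>)" "rank (phi lam \<beta>) j = r"
    using assms unrank_less_length rank_unrank by auto
  then have j: "j < length (pad lam \<beta>)" "rank (phi lam \<beta>) j = r"
    by (simp_all add: length_phi)
  then show ?thesis
    using nth_phi[OF j(1)] rank_phi[OF assms(1) j(1)] by simp
qed

lemma nth_or_zero_inj: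
  assumes "is_composition xs" "is_composition ys" "length xs \<le> L" "length ys \<le> L"
    and eq: "\<And>r. r < L \<Longrightarrow> nth_or_zero xs r = nth_or_zero ys r"
  shows "xs = ys"
proof -
  have "\<not> length xs < length ys" "\<not> length ys < length xs"
    using eq[of "length xs"] eq[of "length ys"] assms(1-4)
    by (auto simp: nth_or_zero_def is_composition_iff_nth)
  then have len: "length xs = length ys" by simp
  show ?thesis
  proof (rule nth_equalityI[OF len])
    fix i assume "i < length xs"
    then show "xs ! i = ys ! i"
      using eq[of i] len assms(3) by (simp add: nth_or_zero_def)
  qed
qed

lemma filter_pad: "is_composition \<beta> \<Longrightarrow> filter (\<lambda>v. 0 < v) (pad lam \<beta>) = \<beta>"
  unfolding pad_def is_composition_def by (simp add: filter_id_conv)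

lemma length_pad_eq_if_phi_eq:
  "phi lam \<beta> = phi lam' \<beta>' \<Longrightarrow> length (pad lam \<beta>) = length (pad lam' \<beta>')"
  by (metis length_phi)

lemma phi_pad_inj:
  assumes "is_partition lam" "is_composition \<beta>" "is_partition lam'" "is_composition \<beta>'"
    and "phi lam \<beta> = phi lam' \<beta>'" "pad lam \<beta> = pad lam' \<beta>'"
  shows "lam = lam' \<and> \<beta> = \<beta>'"
proof
  show "\<beta> = \<beta>'" using filter_pad assms(2,4,6) by metis
  show "lam = lam'"
  proof (rule nth_or_zero_inj[where L="length (phi lam \<beta>)"])
    have "length (phi lam \<beta>) = max (length lam) (length \<beta>)"
      "length (phi lam \<beta>) = max (length lam') (length \<beta>')"
      by (metis length_phi length_pad, metis assms(5) length_phi length_pad)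
    then show "length lam \<le> length (phi lam \<beta>)" "length lam' \<le> length (phi lam \<beta>)"
      by simp_all
    show "nth_or_zero lam r = nth_or_zero lam' r" if "r < length (phi lam \<beta>)" for r
      using that assms(1,3,5,6) nth_or_zero_eq_phi_minus_pad
      unfolding is_partition_def by metis
  qed (use assms(1,3) in \<open>simp_all add: is_partition_def\<close>)
qed

lemma pad_succ_eq_lift:
  assumes len: "length (pad lam \<beta>) = length (pad lam' \<beta>')"
    and succ: "\<And>j. j < length (pad lam' \<beta>') \<Longrightarrow> pad lam \<beta> ! j = Suc (pad lam' \<beta>' ! j)"
    and short: "length \<beta>' < length (pad lam' \<beta>')"
  shows "\<beta> = lift \<beta>' (length (pad lam' \<beta>') - length \<beta>')"
proof -
  let ?L = "length (pad lam' \<beta>')"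
  have last: "?L - 1 < ?L" "\<not> ?L - 1 < length \<beta>'" using short by linarith+
  then have "pad lam \<beta> ! (?L - 1) = 1"
    using succ[of "?L - 1"] nth_pad[of "?L - 1" lam' \<beta>'] by simp
  then have "?L - 1 < length \<beta>"
    using nth_pad[of "?L - 1" lam \<beta>] len last(1) by (metis zero_neq_one)
  then have len_\<beta>: "length \<beta> = ?L"
    using len length_pad[of lam \<beta>] by linarith
  then have pad_\<beta>: "pad lam \<beta> = \<beta>"
    using len by (simp add: pad_def)
  show ?thesis
  proof (rule nth_equalityI)
    show "length \<beta> = length (lift \<beta>' (?L - length \<beta>'))"
      using len_\<beta> short by simp
    fix j assume "j < length \<beta>"
    then have j: "j < ?L" using len_\<beta> by simp
    have "\<beta> ! j = Suc (pad lam' \<beta>' ! j)"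
      using succ[OF j] pad_\<beta> by simp
    also have "\<dots> = lift \<beta>' (?L - length \<beta>') ! j"
      using nth_pad[OF j] j by (simp add: nth_append)
    finally show "\<beta> ! j = lift \<beta>' (?L - length \<beta>') ! j" .
  qed
qed

lemma phi_eq_lowest_not_succ:
  assumes "is_partition lam" "is_composition \<beta>" "inverting \<beta>" "pure \<beta>"
    and "is_partition lam'" "is_composition \<beta>'" "inverting \<beta>'" "pure \<beta>'"
    and eq: "phi lam \<beta> = phi lam' \<beta>'" and L: "0 < length (phi lam \<beta>)"
  defines "low \<equiv> unrank (phi lam \<beta>) (length (phi lam \<beta>) - 1)"
  shows "pad lam \<beta> ! low \<noteq> Suc (pad lam' \<beta>' ! low)"
proof
  let ?a = "phi lam \<beta>"
  assume low_succ: "pad lam \<beta> ! low = Suc (pad lam' \<beta>' ! low)"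
  have sorted: "sorted_wrt (\<ge>) lam" "sorted_wrt (\<ge>) lam'"
    using assms(1,5) by (simp_all add: is_partition_def)
  have "pad lam \<beta> ! low \<le> 1"
    using pad_lowest_le_one_phi[OF sorted(1) assms(3) L] by (simp add: low_def)
  then have zero: "pad lam' \<beta>' ! low = 0" using low_succ by simp
  have lens: "length (pad lam \<beta>) = length ?a" "length (pad lam' \<beta>') = length ?a"
    using length_pad_eq_if_phi_eq[OF eq] by (simp_all add: length_phi)
  have succ: "pad lam \<beta> ! j = Suc (pad lam' \<beta>' ! j)" if "j < length (pad lam' \<beta>')" for j
    using staircase_unique[OF staircase_phi_pad[OF sorted(1) assms(2,3)]
        staircase_phi_pad[OF sorted(2) assms(6,7), folded eq], of j] that low_succ lens eq
    unfolding low_def by simp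
  have low: "low < length ?a" using unrank_less_length L by (simp add: low_def)
  moreover have "\<not> low < length \<beta>'"
    using zero assms(6) nth_pad[of low lam' \<beta>'] low lens by (auto simp: is_composition_iff_nth)
  ultimately have short: "length \<beta>' < length (pad lam' \<beta>')"
    using lens by linarith
  have "\<beta> = lift \<beta>' (length (pad lam' \<beta>') - length \<beta>')"
    using pad_succ_eq_lift[OF _ succ short] lens by simp
  then show False
    using pure_lift_iff[OF assms(6)] short assms(4,8) by simp
qed

lemma phi_eq_imp_pad_eq:
  assumes "is_partition lam" "is_composition \<beta>" "inverting \<beta>" "pure \<beta>"
    and "is_partition lam'" "is_composition \<beta>'" "inverting \<beta>'" "pure \<beta>'"
    and eq: "phi lam \<beta> = phi lam' \<beta>'"
  shows "pad lam \<beta> = pad lam' \<beta>'"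
proof (cases "length (phi lam \<beta>) = 0")
  case True
  then show ?thesis using length_pad_eq_if_phi_eq[OF eq] by (simp add: length_phi)
next
  case False
  let ?a = "phi lam \<beta>"
  let ?low = "unrank ?a (length ?a - 1)"
  have sorted: "sorted_wrt (\<ge>) lam" "sorted_wrt (\<ge>) lam'"
    using assms(1,5) by (simp_all add: is_partition_def)
  have "pad lam \<beta> ! ?low \<le> 1" "pad lam' \<beta>' ! ?low \<le> 1"
    using pad_lowest_le_one_phi[OF sorted(1) assms(3)] pad_lowest_le_one_phi[OF sorted(2) assms(7)]
      False eq by auto
  moreover have "pad lam \<beta> ! ?low \<noteq> Suc (pad lam' \<beta>' ! ?low)"
    using phi_eq_lowest_not_succ[OF assms] False by simp
  moreover have "pad lam' \<beta>' ! ?low \<noteq> Suc (pad lam \<beta> ! ?low)"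
    using phi_eq_lowest_not_succ[OF assms(5-8,1-4) eq[symmetric]] False eq by simp
  ultimately have low_eq: "pad lam \<beta> ! ?low = pad lam' \<beta>' ! ?low" by linarith
  show ?thesis
  proof (rule nth_equalityI)
    show "length (pad lam \<beta>) = length (pad lam' \<beta>')"
      using length_pad_eq_if_phi_eq[OF eq] .
    show "pad lam \<beta> ! j = pad lam' \<beta>' ! j" if "j < length (pad lam \<beta>)" for j
    proof -
      have "j < length ?a" using that by (simp add: length_phi)
      then show ?thesis
        using staircase_unique[OF staircase_phi_pad[OF sorted(1) assms(2,3)]
            staircase_phi_pad[OF sorted(2) assms(6,7), folded eq], of j] low_eq by simp
    qed
  qed
qed

lemma inj_on_phi: "inj_on (\<lambda>(lam, \<beta>). phi lam \<beta>) (PB_set n d)"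
proof (rule inj_onI, clarify)
  fix lam \<beta> lam' \<beta>'
  assume "(lam, \<beta>) \<in> PB_set n d" "(lam', \<beta>') \<in> PB_set n d" and eq: "phi lam \<beta> = phi lam' \<beta>'"
  then have "is_partition lam" "is_composition \<beta>" "inverting \<beta>" "pure \<beta>"
    "is_partition lam'" "is_composition \<beta>'" "inverting \<beta>'" "pure \<beta>'"
    unfolding PB_set_def B_set_def by auto
  with eq show "lam = lam' \<and> \<beta> = \<beta>'"
    using phi_pad_inj phi_eq_imp_pad_eq by metis
qed

section \<open>Surjectivity\<close>

lemma phi_in_C_set: "(lam, \<beta>) \<in> PB_set n d \<Longrightarrow> phi lam \<beta> \<in> C_set n d"
  using is_composition_phi sum_list_phi[of lam \<beta>] length_phi[of lam \<beta>] length_pad[of lam \<beta>]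
  unfolding PB_set_def C_set_def B_set_def is_partition_def by auto

lemma phi_eqI:
  assumes "length (pad lam \<beta>) = length a"
    and rank: "\<And>j. j < length a \<Longrightarrow> rank (pad lam \<beta>) j = rank a j"
    and nth: "\<And>j. j < length a \<Longrightarrow> a!j = pad lam \<beta> ! j + nth_or_zero lam (rank a j)"
  shows "phi lam \<beta> = a"
  using assms(1) by (intro nth_equalityI) (simp_all add: length_phi nth_phi rank nth)

lemma nth_positive_prefix:
  assumes "r < length (takeWhile (\<lambda>v. 0 < v) (map f [0..<L]))"
  shows "takeWhile (\<lambda>v. 0 < v) (map f [0..<L]) ! r = f r"
proof -
  have "length (takeWhile (\<lambda>v. 0 < v) (map f [0..<L])) \<le> L"
    using length_takeWhile_le[of "\<lambda>v. 0 < v" "map f [0..<L]"] by simp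
  then have "r < L" using assms by linarith
  then show ?thesis using assms by (simp add: takeWhile_nth)
qed

lemma is_partition_positive_prefix:
  "antimono f \<Longrightarrow> is_partition (takeWhile (\<lambda>v. 0 < v) (map f [0..<L]))"
  unfolding is_partition_def is_composition_def sorted_wrt_iff_nth_less
  by (auto dest: set_takeWhileD simp: nth_positive_prefix antimonoD)

lemma nth_or_zero_positive_prefix:
  assumes "antimono f" "r < L"
  shows "nth_or_zero (takeWhile (\<lambda>v. 0 < v) (map f [0..<L])) r = f r"
proof -
  let ?lam = "takeWhile (\<lambda>v. 0 < v) (map f [0..<L])"
  have "length ?lam \<le> L"
    using length_takeWhile_le[of _ "map f [0..<L]"] by simp
  show ?thesis
  proof (cases "r < length ?lam")
    case True
    then show ?thesis by (simp add: nth_or_zero_def nth_positive_prefix)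
  next
    case False
    then have "length ?lam < length (map f [0..<L])" using assms(2) by simp
    then have "f (length ?lam) = 0"
      using nth_length_takeWhile[of "\<lambda>v. 0 < v"] by fastforce
    then show ?thesis
      using False assms antimonoD[OF assms(1), of "length ?lam" r] by (simp add: nth_or_zero_def)
  qed
qed

lemma canonical_staircase_in_image:
  assumes "is_composition a" "pure (canonical_staircase a)" "length a \<le> n"
  shows "a \<in> (\<lambda>(lam, \<beta>). phi lam \<beta>) ` PB_set n (sum_list a)"
proof -
  let ?c = "canonical_staircase a"
  define lam where "lam = takeWhile (\<lambda>v. 0 < v) (map (excess a) [0..<length a])"
  have part: "is_partition lam"
    unfolding lam_def by (rule is_partition_positive_prefix[OF antimono_excess[OF assms(1)]])
  have "length lam \<le> length a"
    unfolding lam_def using length_takeWhile_le[of _ "map (excess a) [0..<length a]"] by simp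
  then have pad: "pad lam ?c = ?c" by (simp add: pad_def)
  have "phi lam ?c = a"
  proof (rule phi_eqI)
    fix j assume j: "j < length a"
    show "rank (pad lam ?c) j = rank a j"
      using pad rank_staircase[OF staircase_canonical_staircase j] by simp
    show "a!j = pad lam ?c ! j + nth_or_zero lam (rank a j)"
      using pad nth_eq_canonical_staircase_plus_excess[OF assms(1) j] rank_less_length[OF j]
        nth_or_zero_positive_prefix[OF antimono_excess[OF assms(1)]]
      unfolding lam_def by simp
  qed (simp add: pad)
  moreover have "(lam, ?c) \<in> PB_set n (sum_list a)"
    using part assms \<open>length lam \<le> length a\<close> is_composition_canonical_staircase
      inverting_canonical_staircase sum_list_phi[of lam ?c] \<open>phi lam ?c = a\<close>
    unfolding PB_set_def B_set_def by auto
  ultimately show ?thesis by force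
qed

lemma rank_map_Suc: "j < length b \<Longrightarrow> rank (map Suc b) j = rank b j"
  unfolding rank_def by (intro arg_cong[where f=card]) auto

lemma lifted_canonical_staircase_in_image:
  assumes "is_composition a" "length a \<le> n"
    and lift: "canonical_staircase a = lift y c" "is_composition y" "1 \<le> c"
    and impure: "\<not> pure (canonical_staircase a)"
  shows "a \<in> (\<lambda>(lam, \<beta>). phi lam \<beta>) ` PB_set n (sum_list a)"
proof -
  define lam where "lam = map (\<lambda>r. Suc (excess a r)) [0..<length a]"
  have len: "length a = length y + c"
    using arg_cong[OF lift(1), of length] by simp
  then have pad: "map Suc (pad lam y) = canonical_staircase a"
    using lift(1) by (simp add: lam_def pad_def)
  have part: "is_partition lam"
    using antimonoD[OF antimono_excess[OF assms(1)]]
    unfolding lam_def is_partition_def is_composition_def sorted_wrt_iff_nth_less by auto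
  have "phi lam y = a"
  proof (rule phi_eqI)
    show "length (pad lam y) = length a"
      using arg_cong[OF pad, of length] by simp
    fix j assume j: "j < length a"
    have "rank (pad lam y) j = rank (map Suc (pad lam y)) j"
      using j \<open>length (pad lam y) = length a\<close> by (simp add: rank_map_Suc)
    then show "rank (pad lam y) j = rank a j"
      using pad rank_staircase[OF staircase_canonical_staircase j] by simp
    have "canonical_staircase a ! j = Suc (pad lam y ! j)"
      using pad j \<open>length (pad lam y) = length a\<close> by (metis nth_map)
    then show "a!j = pad lam y ! j + nth_or_zero lam (rank a j)"
      using nth_eq_canonical_staircase_plus_excess[OF assms(1) j] rank_less_length[OF j]
      by (simp add: nth_or_zero_def lam_def)
  qed
  moreover have "(lam, y) \<in> PB_set n (sum_list a)"
    using part lift impure assms(2) len pure_lift_iff[OF lift(2,3)] sum_list_phi[of lam y]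
      inverting_lift_imp_inverting inverting_canonical_staircase[of a] \<open>phi lam y = a\<close>
    unfolding PB_set_def B_set_def by (auto simp: lam_def)
  ultimately show ?thesis by force
qed

lemma C_set_subset_image_phi: "C_set n d \<subseteq> (\<lambda>(lam, \<beta>). phi lam \<beta>) ` PB_set n d"
proof
  fix a assume "a \<in> C_set n d"
  then have a: "is_composition a" "sum_list a = d" "length a \<le> n"
    unfolding C_set_def by auto
  show "a \<in> (\<lambda>(lam, \<beta>). phi lam \<beta>) ` PB_set n d"
  proof (cases "\<exists>y c. 1 \<le> c \<and> is_composition y \<and> canonical_staircase a = lift y c")
    case True
    then obtain y c where "1 \<le> c" "is_composition y" "canonical_staircase a = lift y c"
      by blast
    then show ?thesis
      using canonical_staircase_in_image lifted_canonical_staircase_in_image a by metis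
  next
    case False
    then show ?thesis
      using canonical_staircase_in_image[OF a(1) _ a(3)] pure_if_not_lift
        is_composition_canonical_staircase a(2) by metis
  qed
qed

theorem proposition3p2:
  fixes n d :: nat
  assumes "1 \<le> n"
  shows "bij_betw (\<lambda>(lam, \<beta>). phi lam \<beta>) (PB_set n d) (C_set n d)"
  unfolding bij_betw_def
proof
  show "inj_on (\<lambda>(lam, \<beta>). phi lam \<beta>) (PB_set n d)"
    by (rule inj_on_phi)
  show "(\<lambda>(lam, \<beta>). phi lam \<beta>) ` PB_set n d = C_set n d"
    using phi_in_C_set C_set_subset_image_phi by fastforce
qed

end
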